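(* Let $K$ be a field with two commuting endomorphisms $\phi,\sigma$ satisfying Condition $\mathcal{H}$. Let $A\in\mathrm{GL}_n(K)$ and let $L_A$ be a $\sigma$-Picard–Vessiot extension for $\phi(Y)=AY$ over $K$. If $L_A$ is a field, then $K$ is relatively algebraically closed in $L_A$.
   Context: Condition $\mathcal{H}$: $\sigma\colon K\to K$ is an automorphism; $C=K^\phi=\{a\in K:\phi(a)=a\}$ is algebraically closed; and for every positive integer $r$, $K$ has no finite nontrivial $\phi^r$-field extension (no finite field extension $K'\neq K$ with an endomorphism extending $\phi^r$). A $\sigma$-Picard–Vessiot extension which is a field: a field $L_A\supset K$ with commuting endomorphisms $\phi,\sigma$ extending those of $K$, with $U\in\mathrm{GL}_n(L_A)$, $\phi(U)=AU$, $L_A$ generated as a field over $K$ by entries of $\sigma^i(U)$, $i\ge0$, and $L_A^\phi=K^\phi$. *)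

theory Defs
  imports "HOL-Analysis.Finite_Cartesian_Product" "HOL-Computational_Algebra.Polynomial"
          "HOL-Algebra.Ring" "HOL-Algebra.RingHom"
begin

definition ring_endo :: "('a::ring_1 \<Rightarrow> 'b::ring_1) \<Rightarrow> bool" where
  "ring_endo f \<longleftrightarrow> f 1 = 1 \<and> (\<forall>a b. f (a + b) = f a + f b) \<and> (\<forall>a b. f (a * b) = f a * f b)"

definition fixed :: "('a \<Rightarrow> 'a) \<Rightarrow> 'a set" where
  "fixed f = {a. f a = a}"

definition alg_closed_subfield :: "'k::field set \<Rightarrow> bool" where
  "alg_closed_subfield C \<longleftrightarrow>
     (\<forall>p::'k poly. (\<forall>i. coeff p i \<in> C) \<and> degree p > 0 \<longrightarrow> (\<exists>x\<in>C. poly p x = 0))"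

(* Every finite extension of K is a finite-dimensional
   K-vector space, hence in bijection with a set of polynomials over K; therefore
   extensions are represented (up to isomorphism) by field structures on subsets of 'k poly. *)
definition finite_ext_with_endo ::
  "('k::field \<Rightarrow> 'k) \<Rightarrow> ('k poly) ring \<Rightarrow> ('k \<Rightarrow> 'k poly) \<Rightarrow> ('k poly \<Rightarrow> 'k poly) \<Rightarrow> bool" where
  "finite_ext_with_endo phi0 R \<iota> \<psi> \<longleftrightarrow>
     field R \<and> range \<iota> \<subseteq> carrier R \<and> \<iota> 1 = \<one>\<^bsub>R\<^esub> \<and>
     (\<forall>a b. \<iota> (a + b) = \<iota> a \<oplus>\<^bsub>R\<^esub> \<iota> b) \<and> (\<forall>a b. \<iota> (a * b) = \<iota> a \<otimes>\<^bsub>R\<^esub> \<iota> b) \<and>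
     (\<exists>B. finite B \<and> B \<subseteq> carrier R \<and>
        (\<forall>x\<in>carrier R. \<exists>c. x = finsum R (\<lambda>b. \<iota> (c b) \<otimes>\<^bsub>R\<^esub> b) B)) \<and>
     \<psi> \<in> ring_hom R R \<and> (\<forall>a. \<psi> (\<iota> a) = \<iota> (phi0 a))"

definition condition_H :: "('k::field \<Rightarrow> 'k) \<Rightarrow> ('k \<Rightarrow> 'k) \<Rightarrow> bool" where
  "condition_H \<phi> \<sigma> \<longleftrightarrow>
     bij \<sigma> \<and> alg_closed_subfield (fixed \<phi>) \<and>
     (\<forall>r::nat. r > 0 \<longrightarrow>
        (\<forall>R \<iota> \<psi>. finite_ext_with_endo (\<phi> ^^ r) R \<iota> \<psi> \<longrightarrow> carrier R = range \<iota>))"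

definition is_subfield :: "'a::field set \<Rightarrow> bool" where
  "is_subfield S \<longleftrightarrow> 0 \<in> S \<and> 1 \<in> S \<and> (\<forall>x\<in>S. \<forall>y\<in>S. x + y \<in> S \<and> x * y \<in> S) \<and>
     (\<forall>x\<in>S. - x \<in> S \<and> inverse x \<in> S)"

definition generates_field :: "'a::field set \<Rightarrow> bool" where
  "generates_field G \<longleftrightarrow> (\<forall>S. is_subfield S \<and> G \<subseteq> S \<longrightarrow> S = UNIV)"

definition sigma_PV_field ::
  "('k::field \<Rightarrow> 'k) \<Rightarrow> ('k \<Rightarrow> 'k) \<Rightarrow> 'k^'n^'n \<Rightarrow>
   ('k \<Rightarrow> 'l::field) \<Rightarrow> ('l \<Rightarrow> 'l) \<Rightarrow> ('l \<Rightarrow> 'l) \<Rightarrow> 'l^'n^'n \<Rightarrow> bool" where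
  "sigma_PV_field \<phi> \<sigma> A e \<Phi> \<Sigma> U \<longleftrightarrow>
     ring_endo e \<and> ring_endo \<Phi> \<and> ring_endo \<Sigma> \<and> \<Phi> \<circ> \<Sigma> = \<Sigma> \<circ> \<Phi> \<and>
     (\<forall>a. \<Phi> (e a) = e (\<phi> a)) \<and> (\<forall>a. \<Sigma> (e a) = e (\<sigma> a)) \<and>
     invertible U \<and> map_matrix \<Phi> U = map_matrix e A ** U \<and>
     generates_field (range e \<union> {(\<Sigma> ^^ i) (U $ j $ k) | i j k. True}) \<and>
     fixed \<Phi> = e ` fixed \<phi>"

definition rel_alg_closed_in :: "('k::field \<Rightarrow> 'l::field) \<Rightarrow> bool" where
  "rel_alg_closed_in e \<longleftrightarrow>
     (\<forall>x. (\<exists>p::'k poly. p \<noteq> 0 \<and> poly (map_poly e p) x = 0) \<longrightarrow> x \<in> range e)"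

end

(*
  Let x be algebraic over K. The field L is the union of the subfields
  F_d = K(entries of U, \<sigma> U, ..., \<sigma>^d U), each finitely generated over K and
  \<phi>-stable because \<phi>(\<sigma>^i U) = \<sigma>^i(A) \<sigma>^i(U); so x lies in some F_d, and hence in
  the relative algebraic closure E of K in F_d, which is again \<phi>-stable.
  E is finite over K: adjoining the generators of F_d one at a time gives fields
  K \<subseteq> T \<subseteq> S \<supseteq> F_d with T purely transcendental over K and [S:T] finite, and
  K-linearly independent algebraic elements stay T-linearly independent, so [E:K] \<le> [S:T].
  Thus E with the restriction of \<phi> is a finite \<phi>-field extension of K, and Condition H
  forces E = K.
*)
theory Submission
  imports Defs "HOL-Algebra.Finite_Extensions" "HOL-Algebra.Algebraic_Closure_Type"
begin

(* Algebraic_Closure_Type brings fps_nth's $ into scope, which clashes with vec_nth. *)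
no_notation fps_nth (infixl \<open>$\<close> 75)

section \<open>Ring endomorphisms and subfields\<close>

lemma ring_endo_0: "ring_endo f \<Longrightarrow> f 0 = 0"
  unfolding ring_endo_def by (metis add_cancel_right_right add_0)

lemma ring_endo_1: "ring_endo f \<Longrightarrow> f 1 = 1"
  unfolding ring_endo_def by blast

lemma ring_endo_add: "ring_endo f \<Longrightarrow> f (a + b) = f a + f b"
  unfolding ring_endo_def by blast

lemma ring_endo_mult: "ring_endo f \<Longrightarrow> f (a * b) = f a * f b"
  unfolding ring_endo_def by blast

lemma ring_endo_minus: "ring_endo f \<Longrightarrow> f (- a) = - f a"
  by (metis add.right_inverse add_eq_0_iff ring_endo_0 ring_endo_add)

lemma ring_endo_inverse:
  fixes f :: "'a::field \<Rightarrow> 'b::field"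
  assumes "ring_endo f"
  shows "f (inverse a) = inverse (f a)"
proof (cases "a = 0")
  case True
  then show ?thesis using ring_endo_0[OF assms] by simp
next
  case False
  then have "f a * f (inverse a) = 1"
    using ring_endo_mult[OF assms, of a "inverse a"] ring_endo_1[OF assms] by simp
  then show ?thesis by (metis inverse_unique)
qed

lemma ring_endo_eq_0_iff:
  fixes f :: "'a::field \<Rightarrow> 'b::field"
  assumes "ring_endo f"
  shows "f a = 0 \<longleftrightarrow> a = 0"
  using ring_endo_mult[OF assms, of a "inverse a"] ring_endo_1[OF assms] ring_endo_0[OF assms]
  by (cases "a = 0") auto

lemma ring_endo_sum: "ring_endo f \<Longrightarrow> f (sum g A) = (\<Sum>x\<in>A. f (g x))"
  by (induct A rule: infinite_finite_induct) (simp_all add: ring_endo_0 ring_endo_add)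

lemma ring_endo_funpow: "ring_endo (f :: 'a::ring_1 \<Rightarrow> 'a) \<Longrightarrow> ring_endo (f ^^ n)"
  by (induct n) (simp_all add: ring_endo_def)

lemma ring_endo_poly_map_poly:
  fixes f :: "'a::field \<Rightarrow> 'b::field"
  assumes "ring_endo f"
  shows "poly (map_poly f q) (f y) = f (poly q y)"
  by (induct q) (simp_all add: map_poly_pCons assms ring_endo_0 ring_endo_add ring_endo_mult)

lemma map_poly_ring_endo_eq_0_iff:
  fixes f :: "'a::field \<Rightarrow> 'b::field"
  assumes "ring_endo f"
  shows "map_poly f q = 0 \<longleftrightarrow> q = 0"
  by (simp add: map_poly_eq_0_iff ring_endo_0[OF assms] ring_endo_eq_0_iff[OF assms])

lemma is_subfield_range_ring_endo:
  fixes f :: "'a::field \<Rightarrow> 'b::field"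
  assumes "ring_endo f"
  shows "is_subfield (range f)"
  unfolding is_subfield_def
proof (intro conjI ballI)
  show "0 \<in> range f" "1 \<in> range f"
    by (simp_all add: range_eqI[of _ f 0] range_eqI[of _ f 1] ring_endo_0[OF assms] ring_endo_1[OF assms])
next
  fix x y assume "x \<in> range f" "y \<in> range f"
  then obtain a b where "x = f a" "y = f b" by blast
  then show "x + y \<in> range f" "x * y \<in> range f"
    by (simp_all add: range_eqI[of _ f "a + b"] range_eqI[of _ f "a * b"]
        ring_endo_add[OF assms] ring_endo_mult[OF assms])
next
  fix x assume "x \<in> range f"
  then obtain a where "x = f a" by blast
  then show "- x \<in> range f" "inverse x \<in> range f"
    by (simp_all add: range_eqI[of _ f "- a"] range_eqI[of _ f "inverse a"]
        ring_endo_minus[OF assms] ring_endo_inverse[OF assms])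
qed

lemma is_subfield_sum: "is_subfield K \<Longrightarrow> (\<And>x. x \<in> A \<Longrightarrow> f x \<in> K) \<Longrightarrow> sum f A \<in> K"
  by (induct A rule: infinite_finite_induct) (simp_all add: is_subfield_def)

lemma is_subfield_Inter: "\<forall>K\<in>Ks. is_subfield K \<Longrightarrow> is_subfield (\<Inter>Ks)"
  unfolding is_subfield_def by blast

lemma is_subfield_hull: "is_subfield (is_subfield hull Y)"
  by (rule hull_in) (rule is_subfield_Inter)

lemma is_subfield_Int: "is_subfield K \<Longrightarrow> is_subfield L \<Longrightarrow> is_subfield (K \<inter> L)"
  unfolding is_subfield_def by blast

lemma is_subfield_UN_chain:
  assumes "\<And>d. is_subfield (K d)" and "mono (K :: nat \<Rightarrow> 'a::field set)"
  shows "is_subfield (\<Union>d. K d)"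
  unfolding is_subfield_def
proof (intro conjI ballI)
  show "0 \<in> (\<Union>d. K d)" "1 \<in> (\<Union>d. K d)"
    using assms(1)[of 0] unfolding is_subfield_def by auto
next
  fix x y assume "x \<in> (\<Union>d. K d)" "y \<in> (\<Union>d. K d)"
  then obtain a b where "x \<in> K a" "y \<in> K b" by blast
  then have "x \<in> K (max a b)" "y \<in> K (max a b)"
    using monoD[OF assms(2), of a "max a b"] monoD[OF assms(2), of b "max a b"] by auto
  then show "x + y \<in> (\<Union>d. K d)" "x * y \<in> (\<Union>d. K d)"
    using assms(1)[of "max a b"] unfolding is_subfield_def by blast+
next
  fix x assume "x \<in> (\<Union>d. K d)"
  then obtain a where "x \<in> K a" by blast
  then show "- x \<in> (\<Union>d. K d)" "inverse x \<in> (\<Union>d. K d)"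
    using assms(1)[of a] unfolding is_subfield_def by blast+
qed

lemma is_subfield_vimage:
  fixes h :: "'a::field \<Rightarrow> 'b::field"
  assumes "ring_endo h" and "is_subfield K"
  shows "is_subfield (h -` K)"
  using assms(2) unfolding is_subfield_def vimage_def
  by (simp add: ring_endo_0[OF assms(1)] ring_endo_1[OF assms(1)] ring_endo_add[OF assms(1)]
      ring_endo_mult[OF assms(1)] ring_endo_minus[OF assms(1)] ring_endo_inverse[OF assms(1)])

lemma ring_endo_image_hull_subset:
  fixes h :: "'a::field \<Rightarrow> 'a"
  assumes "ring_endo h" and "h ` Y \<subseteq> is_subfield hull Y"
  shows "h ` (is_subfield hull Y) \<subseteq> is_subfield hull Y"
proof -
  have "is_subfield hull Y \<subseteq> h -` (is_subfield hull Y)"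
    using assms(2) by (intro hull_minimal is_subfield_vimage[OF assms(1) is_subfield_hull]) auto
  then show ?thesis by blast
qed

lemma generates_field_chain:
  assumes "generates_field G" and "G \<subseteq> (\<Union>d. Y d)" and "mono (Y :: nat \<Rightarrow> 'a::field set)"
  shows "\<exists>d. x \<in> is_subfield hull Y d"
proof -
  have "mono (\<lambda>d. is_subfield hull Y d)"
    by (rule monoI) (simp add: hull_mono monoD[OF assms(3)])
  then have "is_subfield (\<Union>d. is_subfield hull Y d)"
    by (intro is_subfield_UN_chain is_subfield_hull)
  moreover have "G \<subseteq> (\<Union>d. is_subfield hull Y d)"
    using assms(2) by (auto intro: hull_inc)
  ultimately have "(\<Union>d. is_subfield hull Y d) = UNIV"
    using assms(1) unfolding generates_field_def by blast
  then show ?thesis by blast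
qed

section \<open>Algebraic elements and linear independence over a subfield\<close>

definition poly_over :: "'a::field set \<Rightarrow> 'a poly \<Rightarrow> bool" where
  "poly_over K p \<longleftrightarrow> (\<forall>i. Polynomial.coeff p i \<in> K)"

definition algebraic_over :: "'a::field set \<Rightarrow> 'a \<Rightarrow> bool" where
  "algebraic_over K x \<longleftrightarrow> (\<exists>p. p \<noteq> 0 \<and> poly_over K p \<and> poly p x = 0)"

definition lin_indep_over :: "'a::field set \<Rightarrow> 'a list \<Rightarrow> bool" where
  "lin_indep_over K us \<longleftrightarrow>
     (\<forall>c. (\<forall>j<length us. c j \<in> K) \<longrightarrow> (\<Sum>j<length us. c j * us ! j) = 0 \<longrightarrow> (\<forall>j<length us. c j = 0))"

lemma poly_over_const: "is_subfield K \<Longrightarrow> a \<in> K \<Longrightarrow> poly_over K [:a:]"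
  by (simp add: poly_over_def coeff_pCons is_subfield_def split: nat.splits)

lemma poly_over_0: "is_subfield K \<Longrightarrow> poly_over K 0"
  by (simp add: poly_over_def is_subfield_def)

lemma poly_over_1: "is_subfield K \<Longrightarrow> poly_over K 1"
  by (simp add: poly_over_def is_subfield_def)

lemma poly_over_X: "is_subfield K \<Longrightarrow> poly_over K [:0, 1:]"
  by (simp add: poly_over_def coeff_pCons is_subfield_def split: nat.splits)

lemma poly_over_add: "is_subfield K \<Longrightarrow> poly_over K p \<Longrightarrow> poly_over K q \<Longrightarrow> poly_over K (p + q)"
  by (simp add: poly_over_def is_subfield_def)

lemma poly_over_uminus: "is_subfield K \<Longrightarrow> poly_over K p \<Longrightarrow> poly_over K (- p)"
  by (simp add: poly_over_def is_subfield_def)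

lemma poly_over_mult: "is_subfield K \<Longrightarrow> poly_over K p \<Longrightarrow> poly_over K q \<Longrightarrow> poly_over K (p * q)"
  unfolding poly_over_def coeff_mult by (auto intro!: is_subfield_sum simp: is_subfield_def)

lemma poly_over_prod:
  "is_subfield K \<Longrightarrow> (\<And>x. x \<in> A \<Longrightarrow> poly_over K (f x)) \<Longrightarrow> poly_over K (prod f A)"
  by (induct A rule: infinite_finite_induct)
    (simp_all add: poly_over_mult poly_over_1)

lemma algebraic_over_mono: "algebraic_over K x \<Longrightarrow> K \<subseteq> L \<Longrightarrow> algebraic_over L x"
  unfolding algebraic_over_def poly_over_def by blast

lemma algebraic_over_self: "is_subfield K \<Longrightarrow> x \<in> K \<Longrightarrow> algebraic_over K x"
  unfolding algebraic_over_def
  by (rule exI[of _ "[:- x, 1:]"])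
    (auto simp: poly_over_def coeff_pCons is_subfield_def split: nat.splits)

lemma algebraic_over_range:
  fixes e :: "'a::field \<Rightarrow> 'b::field"
  assumes "ring_endo e" and "p \<noteq> 0" and "poly (map_poly e p) x = 0"
  shows "algebraic_over (range e) x"
  unfolding algebraic_over_def poly_over_def using assms
  by (intro exI[of _ "map_poly e p"])
    (simp add: map_poly_ring_endo_eq_0_iff coeff_map_poly ring_endo_0[OF assms(1)])

lemma algebraic_over_ring_endo_image:
  fixes h :: "'a::field \<Rightarrow> 'a"
  assumes "ring_endo h" and "h ` K \<subseteq> K" and "algebraic_over K x"
  shows "algebraic_over K (h x)"
proof -
  obtain p where p: "p \<noteq> 0" "poly_over K p" "poly p x = 0"
    using assms(3) unfolding algebraic_over_def by blast
  have "map_poly h p \<noteq> 0"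
    using p(1) map_poly_ring_endo_eq_0_iff[OF assms(1)] by blast
  moreover have "poly_over K (map_poly h p)"
    using p(2) assms(2) by (auto simp: poly_over_def coeff_map_poly ring_endo_0[OF assms(1)])
  moreover have "poly (map_poly h p) (h x) = 0"
    using p(3) by (simp add: ring_endo_poly_map_poly[OF assms(1)] ring_endo_0[OF assms(1)])
  ultimately show ?thesis unfolding algebraic_over_def by blast
qed

(* To use the library's theory of finite extensions, dimension and linear independence,
   the type-class field is viewed as the HOL-Algebra field ring_of_type_algebra. *)
lemma ring_of_type_algebra_simps [simp]:
  "carrier ring_of_type_algebra = UNIV" "monoid.mult ring_of_type_algebra = (*)"
  "one ring_of_type_algebra = 1" "zero ring_of_type_algebra = 0" "add ring_of_type_algebra = (+)"
  by (simp_all add: ring_of_type_algebra_def)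

lemma ring_type_algebra: "ring (ring_of_type_algebra :: 'a::field ring)"
  using field_from_type_algebra field.is_ring by blast

lemma domain_type_algebra: "domain (ring_of_type_algebra :: 'a::field ring)"
  using field_from_type_algebra field.axioms(1) by blast

lemma a_inv_type_algebra [simp]: "a_inv ring_of_type_algebra x = - (x :: 'a::field)"
  by (rule abelian_group.minus_equality[OF ring.is_abelian_group[OF ring_type_algebra]]) simp_all

lemma m_inv_type_algebra:
  "(x :: 'a::field) \<noteq> 0 \<Longrightarrow> m_inv ring_of_type_algebra x = inverse x"
  by (rule monoid.inv_char[OF ring.axioms(2)[OF ring_type_algebra]]) simp_all

lemma subfield_type_algebra_iff:
  "subfield K (ring_of_type_algebra :: 'a::field ring) \<longleftrightarrow> is_subfield K"
proof
  assume K: "subfield K ring_of_type_algebra"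
  note closed = subringE[OF subfieldE(1)[OF K]]
  have "inverse x \<in> K" if "x \<in> K" for x
    using ring.subfield_m_inv(1)[OF ring_type_algebra K, of x] that closed(2)
    by (cases "x = 0") (simp_all add: m_inv_type_algebra)
  then show "is_subfield K"
    unfolding is_subfield_def using closed by simp
next
  assume K: "is_subfield K"
  have "subring K ring_of_type_algebra"
    by (rule ring.subringI[OF ring_type_algebra]) (use K in \<open>auto simp: is_subfield_def\<close>)
  then show "subfield K ring_of_type_algebra"
    by (rule field.subfieldI'[OF field_from_type_algebra])
      (use K in \<open>auto simp: is_subfield_def m_inv_type_algebra\<close>)
qed

lemma subring_type_algebra: "is_subfield K \<Longrightarrow> subring K (ring_of_type_algebra :: 'a::field ring)"
  using subfield_type_algebra_iff subfieldE(1) by blast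

lemma nat_pow_type_algebra [simp]:
  "x [^]\<^bsub>ring_of_type_algebra\<^esub> (n :: nat) = (x :: 'a::field) ^ n"
  by (induct n) (simp_all add: nat_pow_def)

lemma eval_type_algebra: "ring.eval ring_of_type_algebra l (x :: 'a::field) = poly (Poly (rev l)) x"
proof (induct l)
  case Nil
  then show ?case by (simp add: ring.eval.simps[OF ring_type_algebra])
next
  case (Cons a l)
  have "ring.eval ring_of_type_algebra (a # l) x = a * x ^ length l + ring.eval ring_of_type_algebra l x"
    by (simp add: ring.eval.simps[OF ring_type_algebra])
  also have "\<dots> = poly (Poly (rev (a # l))) x"
    using Cons by (simp add: Poly_append poly_monom algebra_simps)
  finally show ?case .
qed

lemma set_coeffs_subset: "poly_over K p \<Longrightarrow> set (coeffs p) \<subseteq> K"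
  unfolding poly_over_def by (metis in_set_conv_nth nth_default_coeffs_eq nth_default_nth subsetI)

lemma Poly_rev_polynomial_type_algebra:
  assumes K: "is_subfield K" and l: "polynomial\<^bsub>ring_of_type_algebra\<^esub> K l" "l \<noteq> []"
  shows "Poly (rev l) \<noteq> 0" and "poly_over K (Poly (rev l))"
proof -
  have "Polynomial.coeff (Poly (rev l)) (length l - 1) = hd l"
    using l(2) by (cases l) (auto simp: nth_default_def nth_append)
  then show "Poly (rev l) \<noteq> 0"
    using l unfolding polynomial_def by (metis coeff_0 ring_of_type_algebra_simps(4))
  show "poly_over K (Poly (rev l))"
    unfolding poly_over_def
  proof
    fix i
    show "Polynomial.coeff (Poly (rev l)) i \<in> K"
    proof (cases "i < length l")
      case True
      then have "rev l ! i \<in> set l" by (metis length_rev nth_mem set_rev)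
      then show ?thesis using l(1) True unfolding polynomial_def by (auto simp: nth_default_def)
    next
      case False
      then show ?thesis using K by (simp add: nth_default_def is_subfield_def)
    qed
  qed
qed

lemma algebraic_type_algebra_iff:
  assumes K: "is_subfield K"
  shows "ring.algebraic ring_of_type_algebra K x \<longleftrightarrow> algebraic_over K (x :: 'a::field)"
proof
  assume "ring.algebraic ring_of_type_algebra K x"
  then obtain l where l: "polynomial\<^bsub>ring_of_type_algebra\<^esub> K l" "l \<noteq> []"
    "ring.eval ring_of_type_algebra l x = 0"
    using domain.algebraicE[OF domain_type_algebra subring_type_algebra[OF K], of x]
    by (auto simp: over_def univ_poly_carrier)
  then show "algebraic_over K x"
    using Poly_rev_polynomial_type_algebra[OF K l(1,2)] unfolding algebraic_over_def
    by (auto simp: eval_type_algebra)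
next
  assume "algebraic_over K x"
  then obtain p where p: "p \<noteq> 0" "poly_over K p" "poly p x = 0"
    unfolding algebraic_over_def by blast
  have "polynomial\<^bsub>ring_of_type_algebra\<^esub> K (rev (coeffs p))"
    unfolding polynomial_def using p set_coeffs_subset[OF p(2)]
    by (auto simp: hd_rev last_coeffs_eq_coeff_degree)
  then show "ring.algebraic ring_of_type_algebra K x"
    using ring.algebraicI[OF ring_type_algebra, of "rev (coeffs p)" K x] p
    by (auto simp: over_def univ_poly_carrier eval_type_algebra)
qed

lemma combine_type_algebra:
  "ring.combine ring_of_type_algebra Ks Us = (\<Sum>j<min (length Ks) (length Us). Ks ! j * (Us ! j :: 'a::field))"
proof (induct Ks arbitrary: Us)
  case Nil
  then show ?case by (simp add: ring.combine.simps[OF ring_type_algebra])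
next
  case (Cons k Ks)
  then show ?case
    by (cases Us) (simp_all add: ring.combine.simps[OF ring_type_algebra] sum.lessThan_Suc_shift
        del: sum.lessThan_Suc)
qed

lemma independent_type_algebra_iff:
  assumes K: "is_subfield K"
  shows "ring.independent ring_of_type_algebra K us \<longleftrightarrow> lin_indep_over K (us :: 'a::field list)"
proof
  have sf: "subfield K ring_of_type_algebra" using K subfield_type_algebra_iff by blast
  assume indep: "ring.independent ring_of_type_algebra K us"
  show "lin_indep_over K us" unfolding lin_indep_over_def
  proof (intro allI impI)
    fix c j assume c: "\<forall>j<length us. c j \<in> K" and sum: "(\<Sum>j<length us. c j * us ! j) = 0"
      and j: "j < length us"
    let ?Ks = "map c [0..<length us]"
    have "set ?Ks \<subseteq> K" "ring.combine ring_of_type_algebra ?Ks us = 0"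
      using c sum by (auto simp: combine_type_algebra)
    then have "set ?Ks \<subseteq> {0}"
      using ring.independent_imp_trivial_combine[OF ring_type_algebra sf indep, of ?Ks] by simp
    then show "c j = 0" using j by (auto simp: subset_iff)
  qed
next
  have sf: "subfield K ring_of_type_algebra" using K subfield_type_algebra_iff by blast
  assume indep: "lin_indep_over K us"
  show "ring.independent ring_of_type_algebra K us"
  proof (rule ring.trivial_combine_imp_independent[OF ring_type_algebra sf])
    fix Ks assume Ks: "set Ks \<subseteq> K" "ring.combine ring_of_type_algebra Ks us = \<zero>\<^bsub>ring_of_type_algebra\<^esub>"
    define c where "c j = (if j < length Ks then Ks ! j else 0)" for j
    have "c j \<in> K" for j
      using Ks(1) K nth_mem unfolding c_def is_subfield_def by fastforce
    moreover have "(\<Sum>j<length us. c j * us ! j) = ring.combine ring_of_type_algebra Ks us"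
      unfolding combine_type_algebra c_def
      by (rule sum.mono_neutral_cong_right) (auto simp: min_def split: if_splits)
    ultimately have "\<forall>j<length us. c j = 0"
      using indep Ks(2) unfolding lin_indep_over_def by simp
    then show "set (take (length us) Ks) \<subseteq> {\<zero>\<^bsub>ring_of_type_algebra\<^esub>}"
      unfolding c_def by (force simp: in_set_conv_nth)
  qed simp
qed

lemma Span_type_algebra_imp_sum:
  assumes "is_subfield K" and "y \<in> ring.Span ring_of_type_algebra K vs"
  shows "\<exists>c. (\<forall>j<length vs. c j \<in> K) \<and> y = (\<Sum>j<length vs. c j * vs ! j)"
proof -
  obtain Ks where Ks: "set Ks \<subseteq> K" "length Ks = length vs" "y = ring.combine ring_of_type_algebra Ks vs"
    using ring.Span_mem_iff_length_version[OF ring_type_algebra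
        subfield_type_algebra_iff[THEN iffD2, OF assms(1)], of vs y] assms(2) by auto
  then show ?thesis
    by (intro exI[of _ "(!) Ks"]) (auto simp: combine_type_algebra)
qed

lemma lin_indep_over_Cons:
  assumes "is_subfield K" and "lin_indep_over K vs" and "y \<notin> ring.Span ring_of_type_algebra K vs"
  shows "lin_indep_over K (y # vs)"
  using ring.li_Cons[OF ring_type_algebra, of y K vs] assms
  by (simp add: independent_type_algebra_iff[symmetric])

lemma lin_indep_over_distinct: "is_subfield K \<Longrightarrow> lin_indep_over K vs \<Longrightarrow> distinct vs"
  using ring.independent_distinct[OF ring_type_algebra]
  by (metis independent_type_algebra_iff subfield_type_algebra_iff)

abbreviation finite_dim_over :: "'a::field set \<Rightarrow> 'a set \<Rightarrow> bool" where
  "finite_dim_over K E \<equiv> ring.finite_dimension ring_of_type_algebra K E"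

lemma finite_dim_over_refl: "is_subfield K \<Longrightarrow> finite_dim_over K K"
  by (rule ring.finite_dimensionI[OF ring_type_algebra ring.dimension_one[OF ring_type_algebra]])
    (simp add: subfield_type_algebra_iff)

lemma finite_dim_over_trans:
  assumes "is_subfield K" "is_subfield E" "finite_dim_over K E" "finite_dim_over E F"
  shows "finite_dim_over K F"
  using ring.telescopic_base_dim(1)[OF ring_type_algebra] assms
  by (simp add: subfield_type_algebra_iff)

lemma finite_dim_over_imp_algebraic:
  assumes "is_subfield K" "is_subfield E" "finite_dim_over K E" "x \<in> E"
  shows "algebraic_over K x"
  using ring.finite_dimension_imp_algebraic[OF ring_type_algebra, of K E x] assms
  by (simp add: subfield_type_algebra_iff subring_type_algebra algebraic_type_algebra_iff over_def)

lemma exists_finite_extension_containing_algebraics: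
  assumes K: "is_subfield K" and ws: "\<forall>w\<in>set ws. algebraic_over K w"
  shows "\<exists>E. is_subfield E \<and> K \<subseteq> E \<and> set ws \<subseteq> E \<and> finite_dim_over K E"
proof (intro exI conjI)
  let ?E = "ring.finite_extension ring_of_type_algebra K ws"
  have alg: "\<And>w. w \<in> set ws \<Longrightarrow> ((ring.algebraic ring_of_type_algebra) over K) w"
    using ws algebraic_type_algebra_iff[OF K] unfolding over_def by simp
  have sf: "subfield K ring_of_type_algebra" using K subfield_type_algebra_iff by blast
  show "is_subfield ?E"
    using domain.finite_extension_is_subfield[OF domain_type_algebra sf] alg
    by (simp add: subfield_type_algebra_iff)
  show "K \<subseteq> ?E"
    using ring.finite_extension_incl[OF ring_type_algebra, of K ws] by simp
  show "set ws \<subseteq> ?E"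
    using domain.finite_extension_mem[OF domain_type_algebra subring_type_algebra[OF K]] by simp
  show "finite_dim_over K ?E"
    using domain.finite_extension_finite_dimension(1)[OF domain_type_algebra sf] alg by simp
qed

lemma finite_dim_over_imp_Span:
  assumes "is_subfield K" and "finite_dim_over K E"
  shows "\<exists>ws. ring.Span ring_of_type_algebra K ws = E"
  using assms ring.exists_base[OF ring_type_algebra]
  unfolding ring.finite_dimension_def[OF ring_type_algebra]
  by (metis subfield_type_algebra_iff)

lemma finite_dim_over_bounds_lin_indep:
  assumes "is_subfield K" and "finite_dim_over K E"
  shows "\<exists>D. \<forall>us. lin_indep_over K us \<and> set us \<subseteq> E \<longrightarrow> length us \<le> D"
proof -
  obtain n where "ring.dimension ring_of_type_algebra n K E"
    using assms(2) unfolding ring.finite_dimension_def[OF ring_type_algebra] by blast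
  then show ?thesis
    using ring.independent_length_le_dimension[OF ring_type_algebra] assms(1)
    by (metis independent_type_algebra_iff subfield_type_algebra_iff)
qed

lemma Span_subset_subfield:
  assumes "is_subfield K" "is_subfield E" "K \<subseteq> E" "set ws \<subseteq> E"
  shows "ring.Span ring_of_type_algebra K ws \<subseteq> E"
proof
  fix y assume "y \<in> ring.Span ring_of_type_algebra K ws"
  then obtain c where c: "\<forall>j<length ws. c j \<in> K" "y = (\<Sum>j<length ws. c j * ws ! j)"
    using Span_type_algebra_imp_sum[OF assms(1)] by blast
  have "c j * ws ! j \<in> E" if "j < length ws" for j
    using c(1) assms(2-4) that nth_mem unfolding is_subfield_def by blast
  then show "y \<in> E" unfolding c(2) by (intro is_subfield_sum[OF assms(2)]) simp
qed

lemma exists_finite_compositum: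
  assumes T: "is_subfield T" "is_subfield T'" "T \<subseteq> T'" and S: "is_subfield S" "finite_dim_over T S"
  shows "\<exists>S'. is_subfield S' \<and> T' \<subseteq> S' \<and> S \<subseteq> S' \<and> finite_dim_over T' S'"
proof -
  obtain ws where ws: "ring.Span ring_of_type_algebra T ws = S"
    using finite_dim_over_imp_Span[OF T(1) S(2)] by blast
  have "set ws \<subseteq> S"
    using ring.Span_base_incl[OF ring_type_algebra, of T ws] T(1) ws
    by (simp add: subfield_type_algebra_iff)
  then have "\<forall>w\<in>set ws. algebraic_over T' w"
    using finite_dim_over_imp_algebraic[OF T(1) S] algebraic_over_mono T(3) by blast
  then obtain S' where S': "is_subfield S'" "T' \<subseteq> S'" "set ws \<subseteq> S'" "finite_dim_over T' S'"
    using exists_finite_extension_containing_algebraics[OF T(2)] by blast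
  moreover have "S \<subseteq> S'"
    using Span_subset_subfield[OF T(1) S'(1) _ S'(3)] T(3) S'(2) ws by blast
  ultimately show ?thesis by blast
qed

lemma is_subfield_algebraics:
  assumes "is_subfield K"
  shows "is_subfield {x. algebraic_over K x}"
proof -
  have "subfield {x \<in> carrier ring_of_type_algebra. ((ring.algebraic ring_of_type_algebra) over K) x}
      ring_of_type_algebra"
    using field.subfield_of_algebraics[OF field_from_type_algebra] assms
    by (simp add: subfield_type_algebra_iff)
  then show ?thesis
    by (simp add: algebraic_type_algebra_iff[OF assms] subfield_type_algebra_iff over_def)
qed

section \<open>Linear disjointness from purely transcendental extensions\<close>

definition field_adjoin :: "'a::field set \<Rightarrow> 'a \<Rightarrow> 'a set" where
  "field_adjoin K g = {poly p g / poly q g | p q. poly_over K p \<and> poly_over K q \<and> poly q g \<noteq> 0}"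

lemma field_adjoinI:
  "poly_over K p \<Longrightarrow> poly_over K q \<Longrightarrow> poly q g \<noteq> 0 \<Longrightarrow> poly p g / poly q g \<in> field_adjoin K g"
  unfolding field_adjoin_def by blast

lemma is_subfield_field_adjoin:
  assumes K: "is_subfield K"
  shows "is_subfield (field_adjoin K g)"
  unfolding is_subfield_def
proof (intro conjI ballI)
  show "0 \<in> field_adjoin K g"
    using field_adjoinI[OF poly_over_0[OF K] poly_over_1[OF K], of g] by simp
  show "1 \<in> field_adjoin K g"
    using field_adjoinI[OF poly_over_1[OF K] poly_over_1[OF K], of g] by simp
next
  fix x y assume "x \<in> field_adjoin K g" "y \<in> field_adjoin K g"
  then obtain p q p' q' where pq: "poly_over K p" "poly_over K q" "poly q g \<noteq> 0"
      "poly_over K p'" "poly_over K q'" "poly q' g \<noteq> 0"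
    and xy: "x = poly p g / poly q g" "y = poly p' g / poly q' g"
    unfolding field_adjoin_def by blast
  have "poly (p * q' + p' * q) g / poly (q * q') g \<in> field_adjoin K g"
    by (rule field_adjoinI) (simp_all add: pq poly_over_add poly_over_mult K)
  moreover have "poly (p * q' + p' * q) g / poly (q * q') g = x + y"
    unfolding xy using pq(3,6) by (simp add: field_simps)
  ultimately show "x + y \<in> field_adjoin K g" by simp
  have "poly (p * p') g / poly (q * q') g \<in> field_adjoin K g"
    by (rule field_adjoinI) (simp_all add: pq poly_over_mult K)
  moreover have "poly (p * p') g / poly (q * q') g = x * y"
    unfolding xy by simp
  ultimately show "x * y \<in> field_adjoin K g" by simp
next
  fix x assume "x \<in> field_adjoin K g"
  then obtain p q where pq: "poly_over K p" "poly_over K q" "poly q g \<noteq> 0"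
    and x: "x = poly p g / poly q g"
    unfolding field_adjoin_def by blast
  have "poly (- p) g / poly q g \<in> field_adjoin K g"
    by (rule field_adjoinI) (simp_all add: pq poly_over_uminus K)
  then show "- x \<in> field_adjoin K g" unfolding x by simp
  show "inverse x \<in> field_adjoin K g"
  proof (cases "poly p g = 0")
    case True
    then show ?thesis
      using field_adjoinI[OF poly_over_0[OF K] poly_over_1[OF K], of g] x by simp
  next
    case False
    have "poly q g / poly p g \<in> field_adjoin K g"
      by (rule field_adjoinI) (simp_all add: pq False)
    then show ?thesis unfolding x by simp
  qed
qed

lemma subset_field_adjoin: "is_subfield K \<Longrightarrow> K \<subseteq> field_adjoin K g"
proof
  fix a assume "is_subfield K" "a \<in> K"
  then have "poly [:a:] g / poly 1 g \<in> field_adjoin K g"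
    by (intro field_adjoinI poly_over_const poly_over_1) simp_all
  then show "a \<in> field_adjoin K g" by simp
qed

lemma mem_field_adjoin: "is_subfield K \<Longrightarrow> g \<in> field_adjoin K g"
  using field_adjoinI[OF poly_over_X poly_over_1, of K g] by simp

lemma field_adjoin_common_denominator:
  fixes m :: nat
  assumes K: "is_subfield K" and c: "\<forall>j<m. c j \<in> field_adjoin K g"
  shows "\<exists>Q P. Q \<noteq> 0 \<and> (\<forall>j<m. poly_over K (P j) \<and> poly (P j) g = c j * Q)"
proof -
  have "\<forall>j. \<exists>p q. j < m \<longrightarrow> poly_over K p \<and> poly_over K q \<and> poly q g \<noteq> 0 \<and> c j = poly p g / poly q g"
    using c unfolding field_adjoin_def by blast
  then obtain p q where pq: "\<And>j. j < m \<Longrightarrow>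
      poly_over K (p j) \<and> poly_over K (q j) \<and> poly (q j) g \<noteq> 0 \<and> c j = poly (p j) g / poly (q j) g"
    by metis
  define P where "P j = p j * (\<Prod>l\<in>{..<m} - {j}. q l)" for j
  have "poly (P j) g = c j * (\<Prod>l<m. poly (q l) g)" if j: "j < m" for j
  proof -
    have "(\<Prod>l<m. poly (q l) g) = poly (q j) g * (\<Prod>l\<in>{..<m} - {j}. poly (q l) g)"
      by (rule prod.remove) (use j in auto)
    then show ?thesis using pq[OF j] by (simp add: P_def poly_prod)
  qed
  moreover have "poly_over K (P j)" if "j < m" for j
    unfolding P_def using pq that by (auto intro!: poly_over_mult poly_over_prod K)
  moreover have "(\<Prod>l<m. poly (q l) g) \<noteq> 0" using pq by simp
  ultimately show ?thesis by blast
qed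

lemma not_algebraic_over_finite_extension:
  assumes "is_subfield K" "is_subfield E" "finite_dim_over K E" "\<not> algebraic_over K g"
  shows "\<not> algebraic_over E g"
proof
  assume "algebraic_over E g"
  then obtain E' where "is_subfield E'" "E \<subseteq> E'" "g \<in> E'" "finite_dim_over E E'"
    using exists_finite_extension_containing_algebraics[OF assms(2), of "[g]"] by auto
  then show False
    using finite_dim_over_trans[OF assms(1-3)] finite_dim_over_imp_algebraic[OF assms(1)] assms(4)
    by blast
qed

lemma lin_indep_over_poly_transcendental:
  assumes T: "is_subfield T" and E: "is_subfield E" "T \<subseteq> E" "set us \<subseteq> E"
    and indep: "lin_indep_over T us" and trans: "\<not> algebraic_over E g"
    and P: "\<forall>j<length us. poly_over T (P j)"
    and root: "poly (\<Sum>j<length us. Polynomial.smult (us ! j) (P j)) g = 0"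
  shows "\<forall>j<length us. P j = 0"
proof -
  let ?H = "\<Sum>j<length us. Polynomial.smult (us ! j) (P j)"
  have coeff_H: "Polynomial.coeff ?H k = (\<Sum>j<length us. Polynomial.coeff (P j) k * us ! j)" for k
    by (simp add: coeff_sum mult.commute)
  have "Polynomial.coeff (P j) k * us ! j \<in> E" if "j < length us" for j k
    using P E that nth_mem unfolding poly_over_def is_subfield_def by blast
  then have "poly_over E ?H"
    unfolding poly_over_def coeff_H by (auto intro: is_subfield_sum[OF E(1)])
  then have "?H = 0"
    using trans root unfolding algebraic_over_def by blast
  then have "\<forall>j<length us. Polynomial.coeff (P j) k = 0" for k
    using indep[unfolded lin_indep_over_def, THEN spec[of _ "\<lambda>j. Polynomial.coeff (P j) k"]]
      P coeff_H[of k] unfolding poly_over_def by simp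
  then show ?thesis by (auto intro: poly_eqI)
qed

definition algebraics_lin_disjoint :: "'a::field set \<Rightarrow> 'a set \<Rightarrow> bool" where
  "algebraics_lin_disjoint K T \<longleftrightarrow>
     (\<forall>us. (\<forall>u\<in>set us. algebraic_over K u) \<longrightarrow> lin_indep_over K us \<longrightarrow> lin_indep_over T us)"

lemma algebraics_lin_disjoint_refl: "algebraics_lin_disjoint K K"
  unfolding algebraics_lin_disjoint_def by blast

lemma algebraics_lin_disjoint_field_adjoin:
  assumes K: "is_subfield K" and T: "is_subfield T" "K \<subseteq> T"
    and disj: "algebraics_lin_disjoint K T" and trans: "\<not> algebraic_over T g"
  shows "algebraics_lin_disjoint K (field_adjoin T g)"
  unfolding algebraics_lin_disjoint_def
proof (intro allI impI)
  fix us assume alg: "\<forall>u\<in>set us. algebraic_over K u" and "lin_indep_over K us"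
  then have indep: "lin_indep_over T us"
    using disj unfolding algebraics_lin_disjoint_def by blast
  have "\<forall>u\<in>set us. algebraic_over T u"
    using alg algebraic_over_mono[OF _ T(2)] by blast
  then obtain E where E: "is_subfield E" "T \<subseteq> E" "set us \<subseteq> E" "finite_dim_over T E"
    using exists_finite_extension_containing_algebraics[OF T(1)] by blast
  show "lin_indep_over (field_adjoin T g) us"
    unfolding lin_indep_over_def
  proof (intro allI impI)
    fix c j assume c: "\<forall>j<length us. c j \<in> field_adjoin T g"
      and sum: "(\<Sum>j<length us. c j * us ! j) = 0" and j: "j < length us"
    obtain Q P where QP: "Q \<noteq> 0" "\<forall>j<length us. poly_over T (P j) \<and> poly (P j) g = c j * Q"
      using field_adjoin_common_denominator[OF T(1) c] by blast
    have "poly (\<Sum>j<length us. Polynomial.smult (us ! j) (P j)) g = Q * (\<Sum>j<length us. c j * us ! j)"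
      using QP(2) by (simp add: poly_sum sum_distrib_left algebra_simps)
    then have "\<forall>j<length us. P j = 0"
      using lin_indep_over_poly_transcendental[OF T(1) E(1-3) indep
          not_algebraic_over_finite_extension[OF T(1) E(1,4) trans]] QP(2) sum by simp
    then show "c j = 0" using QP j by auto
  qed
qed

(* Transcendental generators are adjoined to T; algebraic ones only enlarge S finitely. *)
lemma exists_lin_disjoint_tower:
  assumes K: "is_subfield K"
  shows "\<exists>T S. is_subfield T \<and> is_subfield S \<and> K \<subseteq> T \<and> T \<subseteq> S \<and> finite_dim_over T S \<and>
    set G \<subseteq> S \<and> algebraics_lin_disjoint K T"
proof (induct G)
  case Nil
  show ?case
    using K finite_dim_over_refl[OF K] algebraics_lin_disjoint_refl[of K]
    by (intro exI[of _ K]) auto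
next
  case (Cons g G)
  then obtain T S where T: "is_subfield T" "K \<subseteq> T" "algebraics_lin_disjoint K T"
    and S: "is_subfield S" "T \<subseteq> S" "finite_dim_over T S" "set G \<subseteq> S"
    by blast
  show ?case
  proof (cases "algebraic_over S g")
    case True
    then obtain S' where S': "is_subfield S'" "S \<subseteq> S'" "g \<in> S'" "finite_dim_over S S'"
      using exists_finite_extension_containing_algebraics[OF S(1), of "[g]"] by auto
    have "finite_dim_over T S'"
      using finite_dim_over_trans[OF T(1) S(1,3) S'(4)] .
    moreover have "set (g # G) \<subseteq> S'"
      using S(4) S'(2,3) by auto
    ultimately show ?thesis
      using T S S' by (meson order_trans)
  next
    case False
    define T' where "T' = field_adjoin T g"
    have T': "is_subfield T'" "T \<subseteq> T'" "g \<in> T'"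
      unfolding T'_def using T(1) by (simp_all add: is_subfield_field_adjoin subset_field_adjoin
          mem_field_adjoin)
    obtain S' where S': "is_subfield S'" "T' \<subseteq> S'" "S \<subseteq> S'" "finite_dim_over T' S'"
      using exists_finite_compositum[OF T(1) T'(1,2) S(1,3)] by blast
    moreover have "algebraics_lin_disjoint K T'"
      unfolding T'_def
      using algebraics_lin_disjoint_field_adjoin[OF K T(1,2,3)] False algebraic_over_mono S(2)
      by blast
    moreover have "set (g # G) \<subseteq> S'"
      using S(4) T'(3) S'(2,3) by auto
    moreover have "K \<subseteq> T'"
      using T(2) T'(2) by blast
    ultimately show ?thesis
      using T'(1) S'(1,2,4) by blast
  qed
qed

section \<open>Finiteness of the relative algebraic closure\<close>

definition finitely_spanned_over :: "'a::field set \<Rightarrow> 'a set \<Rightarrow> bool" where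
  "finitely_spanned_over K E \<longleftrightarrow>
     (\<exists>V. finite V \<and> V \<subseteq> E \<and> (\<forall>y\<in>E. \<exists>c. (\<forall>v\<in>V. c v \<in> K) \<and> y = (\<Sum>v\<in>V. c v * v)))"

lemma exists_maximal_lin_indep:
  assumes K: "is_subfield K"
    and bound: "\<And>us. lin_indep_over K us \<Longrightarrow> set us \<subseteq> E \<Longrightarrow> length us \<le> D"
  shows "\<exists>vs. set vs \<subseteq> E \<and> lin_indep_over K vs \<and> E \<subseteq> ring.Span ring_of_type_algebra K vs"
proof -
  define P where "P n \<longleftrightarrow> (\<exists>us. lin_indep_over K us \<and> set us \<subseteq> E \<and> length us = n)" for n
  have "P 0" unfolding P_def lin_indep_over_def by (intro exI[of _ "[]"]) simp
  have P_le: "P n \<Longrightarrow> n \<le> D" for n using bound unfolding P_def by blast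
  obtain vs where vs: "lin_indep_over K vs" "set vs \<subseteq> E" "length vs = (GREATEST n. P n)"
    using GreatestI_nat[of P 0 D] \<open>P 0\<close> P_le unfolding P_def by blast
  have "E \<subseteq> ring.Span ring_of_type_algebra K vs"
  proof
    fix y assume y: "y \<in> E"
    show "y \<in> ring.Span ring_of_type_algebra K vs"
    proof (rule ccontr)
      assume "y \<notin> ring.Span ring_of_type_algebra K vs"
      then have "P (Suc (length vs))"
        using lin_indep_over_Cons[OF K vs(1)] y vs(2) unfolding P_def
        by (intro exI[of _ "y # vs"]) auto
      then show False using Greatest_le_nat[of P _ D] P_le vs(3) by fastforce
    qed
  qed
  then show ?thesis using vs by blast
qed

lemma finitely_spanned_overI:
  assumes K: "is_subfield K" and vs: "lin_indep_over K vs" "set vs \<subseteq> E"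
    and span: "E \<subseteq> ring.Span ring_of_type_algebra K vs"
  shows "finitely_spanned_over K E"
proof -
  have bij: "bij_betw ((!) vs) {..<length vs} (set vs)"
    by (rule bij_betw_nth[OF lin_indep_over_distinct[OF K vs(1)]]) simp_all
  define idx where "idx = inv_into {..<length vs} ((!) vs)"
  have idx_nth: "idx (vs ! j) = j" if "j < length vs" for j
    unfolding idx_def using bij_betw_imp_inj_on[OF bij] that by simp
  have "\<exists>c. (\<forall>v\<in>set vs. c v \<in> K) \<and> y = (\<Sum>v\<in>set vs. c v * v)" if "y \<in> E" for y
  proof -
    obtain c where c: "\<forall>j<length vs. c j \<in> K" "y = (\<Sum>j<length vs. c j * vs ! j)"
      using Span_type_algebra_imp_sum[OF K] span \<open>y \<in> E\<close> by blast
    have "\<forall>v\<in>set vs. c (idx v) \<in> K"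
      using c(1) idx_nth by (auto simp: in_set_conv_nth)
    moreover have "(\<Sum>v\<in>set vs. c (idx v) * v) = (\<Sum>j<length vs. c (idx (vs ! j)) * vs ! j)"
      using sum.reindex_bij_betw[OF bij, of "\<lambda>v. c (idx v) * v"] by simp
    then have "y = (\<Sum>v\<in>set vs. c (idx v) * v)"
      using c(2) idx_nth by simp
    ultimately show ?thesis by (intro exI[of _ "\<lambda>v. c (idx v)"]) simp
  qed
  then show ?thesis
    unfolding finitely_spanned_over_def using vs(2) by blast
qed

(* K-independent elements of the relative algebraic closure stay T-independent in S,
   so their number is bounded by [S:T]. *)
lemma relative_algebraic_closure_finitely_spanned:
  assumes K: "is_subfield K" and "finite G" and F: "F \<subseteq> is_subfield hull (K \<union> G)"
  shows "finitely_spanned_over K (F \<inter> {x. algebraic_over K x})"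
proof -
  obtain Gs where "set Gs = G" using finite_list[OF \<open>finite G\<close>] by blast
  then obtain T S where T: "is_subfield T" "K \<subseteq> T" "algebraics_lin_disjoint K T"
    and S: "is_subfield S" "T \<subseteq> S" "finite_dim_over T S" "G \<subseteq> S"
    using exists_lin_disjoint_tower[OF K, of Gs] by blast
  have "F \<subseteq> S"
    using F hull_minimal[of "K \<union> G" S is_subfield] S T(2) by blast
  obtain D where D: "\<forall>us. lin_indep_over T us \<and> set us \<subseteq> S \<longrightarrow> length us \<le> D"
    using finite_dim_over_bounds_lin_indep[OF T(1) S(3)] by blast
  have "length us \<le> D"
    if "lin_indep_over K us" "set us \<subseteq> F \<inter> {x. algebraic_over K x}" for us
    using that T(3) D \<open>F \<subseteq> S\<close> unfolding algebraics_lin_disjoint_def by blast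
  then obtain vs where "set vs \<subseteq> F \<inter> {x. algebraic_over K x}" "lin_indep_over K vs"
      "F \<inter> {x. algebraic_over K x} \<subseteq> ring.Span ring_of_type_algebra K vs"
    using exists_maximal_lin_indep[OF K] by blast
  then show ?thesis by (intro finitely_spanned_overI[OF K])
qed

section \<open>Transport to field structures on polynomials\<close>

abbreviation image_field :: "('a::field \<Rightarrow> 'b) \<Rightarrow> 'a set \<Rightarrow> 'b ring" where
  "image_field f E \<equiv> image_ring f (ring_of_type_algebra\<lparr>carrier := E\<rparr>)"

lemma field_type_algebra_restrict:
  "is_subfield E \<Longrightarrow> field ((ring_of_type_algebra :: 'a::field ring)\<lparr>carrier := E\<rparr>)"
  using ring.subfield_iff(2)[OF ring_type_algebra] by (simp add: subfield_type_algebra_iff)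

lemma finsum_type_algebra_restrict:
  assumes E: "is_subfield E" and h: "h ` V \<subseteq> E"
  shows "finsum ((ring_of_type_algebra :: 'a::field ring)\<lparr>carrier := E\<rparr>) h V = sum h V"
  using h
proof (induct V rule: infinite_finite_induct)
  interpret S: field "(ring_of_type_algebra :: 'a ring)\<lparr>carrier := E\<rparr>"
    using field_type_algebra_restrict[OF E] .
  {
    case (infinite V)
    then show ?case by simp
  next
    case empty
    then show ?case by simp
  next
    case (insert v V)
    then show ?case by (simp add: Pi_iff image_subset_iff)
  }
qed

lemma carrier_image_field: "carrier (image_field f E) = f ` E"
  by (simp add: image_ring_carrier)

lemma field_image_field: "is_subfield E \<Longrightarrow> inj_on f E \<Longrightarrow> field (image_field f E)"
  using field.inj_imp_image_ring_is_field[OF field_type_algebra_restrict] by simp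

lemma ring_hom_image_field:
  "inj_on f E \<Longrightarrow> f \<in> ring_hom (ring_of_type_algebra\<lparr>carrier := E\<rparr>) (image_field f E)"
  using inj_imp_image_ring_iso[of f "ring_of_type_algebra\<lparr>carrier := E\<rparr>"] by (simp add: ring_iso_def)

lemma finsum_image_field:
  assumes E: "is_subfield E" and f: "inj_on f E" and h: "h ` V \<subseteq> E"
  shows "finsum (image_field f E) (\<lambda>v. f (h v)) V = f (\<Sum>v\<in>V. h v)"
proof -
  interpret R: field "image_field f E" using field_image_field[OF E f] .
  have "ring_hom_cring (ring_of_type_algebra\<lparr>carrier := E\<rparr>) (image_field f E) f"
    using field_type_algebra_restrict[OF E] ring_hom_image_field[OF f] R.cring_axioms
    by (intro ring_hom_cringI) (simp_all add: field.axioms(1) domain.axioms(1))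
  from ring_hom_cring.hom_finsum[OF this, of h V]
  have "finsum (image_field f E) (\<lambda>v. f (h v)) V
      = f (finsum (ring_of_type_algebra\<lparr>carrier := E\<rparr>) h V)"
    using h by (simp add: Pi_iff image_subset_iff comp_def)
  also have "\<dots> = f (\<Sum>v\<in>V. h v)"
    using finsum_type_algebra_restrict[OF E h] by simp
  finally show ?thesis .
qed

lemma conjugate_ring_endo_image_field_hom:
  fixes g :: "'a::field \<Rightarrow> 'a" and f :: "'a \<Rightarrow> 'b"
  assumes E: "is_subfield E" "g ` E \<subseteq> E" and g: "ring_endo g" and f: "inj_on f E"
  shows "(\<lambda>b. f (g (inv_into E f b))) \<in> ring_hom (image_field f E) (image_field f E)"
proof (rule ring_hom_memI)
  note hom = ring_hom_image_field[OF f]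
  have closed: "x * y \<in> E" "x + y \<in> E" "g x \<in> E" if "x \<in> E" "y \<in> E" for x y
    using E that unfolding is_subfield_def by blast+
  have conj: "f (g (inv_into E f (f x))) = f (g x)" if "x \<in> E" for x
    using f that by simp
  {
    fix x assume "x \<in> carrier (image_field f E)"
    then show "f (g (inv_into E f x)) \<in> carrier (image_field f E)"
      unfolding carrier_image_field using f closed(3) by auto
  next
    fix x y assume "x \<in> carrier (image_field f E)" "y \<in> carrier (image_field f E)"
    then obtain a b where ab: "a \<in> E" "b \<in> E" "x = f a" "y = f b"
      unfolding carrier_image_field by auto
    have "x \<otimes>\<^bsub>image_field f E\<^esub> y = f (a * b)" "x \<oplus>\<^bsub>image_field f E\<^esub> y = f (a + b)"
      using ring_hom_mult[OF hom, of a b] ring_hom_add[OF hom, of a b] ab by simp_all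
    moreover have "f (g a * g b) = f (g a) \<otimes>\<^bsub>image_field f E\<^esub> f (g b)"
      "f (g a + g b) = f (g a) \<oplus>\<^bsub>image_field f E\<^esub> f (g b)"
      using ring_hom_mult[OF hom] ring_hom_add[OF hom] ab closed(3) by simp_all
    ultimately show
      "f (g (inv_into E f (x \<otimes>\<^bsub>image_field f E\<^esub> y)))
        = f (g (inv_into E f x)) \<otimes>\<^bsub>image_field f E\<^esub> f (g (inv_into E f y))"
      "f (g (inv_into E f (x \<oplus>\<^bsub>image_field f E\<^esub> y)))
        = f (g (inv_into E f x)) \<oplus>\<^bsub>image_field f E\<^esub> f (g (inv_into E f y))"
      using ab closed(1,2) conj by (simp_all add: ring_endo_mult[OF g] ring_endo_add[OF g])
  next
    have "1 \<in> E" using E(1) unfolding is_subfield_def by blast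
    then show "f (g (inv_into E f \<one>\<^bsub>image_field f E\<^esub>)) = \<one>\<^bsub>image_field f E\<^esub>"
      unfolding image_ring_one using conj by (simp add: ring_endo_1[OF g])
  }
qed

lemma finsum_image_field_combination:
  assumes E: "is_subfield E" and f: "inj_on f E" and V: "finite V" "V \<subseteq> E" and k: "k ` V \<subseteq> E"
  shows "finsum (image_field f E) (\<lambda>b. f (k (inv_into E f b)) \<otimes>\<^bsub>image_field f E\<^esub> b) (f ` V)
    = f (\<Sum>v\<in>V. k v * v)"
proof -
  let ?R = "image_field f E"
  interpret R: field ?R using field_image_field[OF E f] .
  have term_E: "k v * v \<in> E" if "v \<in> V" for v
    using E k V(2) that unfolding is_subfield_def by blast
  have term_R: "f (k v) \<otimes>\<^bsub>?R\<^esub> f v = f (k v * v)" if "v \<in> V" for v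
  proof -
    have "k v \<in> E" "v \<in> E" using k V(2) that by auto
    then show ?thesis using ring_hom_mult[OF ring_hom_image_field[OF f], of "k v" v] by simp
  qed
  have "finsum ?R (\<lambda>b. f (k (inv_into E f b)) \<otimes>\<^bsub>?R\<^esub> b) (f ` V)
      = finsum ?R (\<lambda>v. f (k (inv_into E f (f v))) \<otimes>\<^bsub>?R\<^esub> f v) V"
  proof (rule R.finsum_reindex)
    show "(\<lambda>b. f (k (inv_into E f b)) \<otimes>\<^bsub>?R\<^esub> b) \<in> f ` V \<rightarrow> carrier ?R"
    proof
      fix b assume "b \<in> f ` V"
      then have "b \<in> carrier ?R" "f (k (inv_into E f b)) \<in> carrier ?R"
        using f k V(2) unfolding carrier_image_field by (auto simp: subset_iff image_subset_iff)
      then show "f (k (inv_into E f b)) \<otimes>\<^bsub>?R\<^esub> b \<in> carrier ?R"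
        by (intro R.m_closed)
    qed
  qed (rule inj_on_subset[OF f V(2)])
  also have "\<dots> = finsum ?R (\<lambda>v. f (k v * v)) V"
  proof (rule R.finsum_cong')
    show "(\<lambda>v. f (k v * v)) \<in> V \<rightarrow> carrier ?R"
      unfolding carrier_image_field using term_E by blast
    show "f (k (inv_into E f (f v))) \<otimes>\<^bsub>?R\<^esub> f v = f (k v * v)" if "v \<in> V" for v
      using term_R[OF that] f V(2) that by (simp add: subset_iff)
  qed simp
  also have "\<dots> = f (\<Sum>v\<in>V. k v * v)"
    using term_E by (intro finsum_image_field[OF E f]) auto
  finally show ?thesis .
qed

lemma image_field_finitely_spanned:
  fixes e :: "'k::field \<Rightarrow> 'l::field" and f :: "'l \<Rightarrow> 'b"
  assumes E: "is_subfield E" "range e \<subseteq> E" and span: "finitely_spanned_over (range e) E"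
    and f: "inj_on f E"
  obtains B where "finite B" "B \<subseteq> carrier (image_field f E)"
    "\<forall>x\<in>carrier (image_field f E). \<exists>c. x = finsum (image_field f E) (\<lambda>b. f (e (c b)) \<otimes>\<^bsub>image_field f E\<^esub> b) B"
proof -
  obtain V where V: "finite V" "V \<subseteq> E"
    and coords: "\<forall>y\<in>E. \<exists>c. (\<forall>v\<in>V. c v \<in> range e) \<and> y = (\<Sum>v\<in>V. c v * v)"
    using span unfolding finitely_spanned_over_def by blast
  have "\<exists>c. x = finsum (image_field f E) (\<lambda>b. f (e (c b)) \<otimes>\<^bsub>image_field f E\<^esub> b) (f ` V)"
    if x: "x \<in> carrier (image_field f E)" for x
  proof -
    obtain y where y: "y \<in> E" "x = f y"
      using x unfolding carrier_image_field by blast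
    obtain c where c: "\<forall>v\<in>V. c v \<in> range e" "y = (\<Sum>v\<in>V. c v * v)"
      using coords y(1) by blast
    define a where "a v = inv_into UNIV e (c v)" for v
    have "e (a v) = c v" if "v \<in> V" for v
      unfolding a_def using c(1) that by (simp add: f_inv_into_f)
    then have "x = f (\<Sum>v\<in>V. e (a v) * v)"
      using y c(2) by simp
    also have "\<dots> = finsum (image_field f E) (\<lambda>b. f (e (a (inv_into E f b))) \<otimes>\<^bsub>image_field f E\<^esub> b) (f ` V)"
      using E(2) by (intro finsum_image_field_combination[OF E(1) f V, symmetric]) auto
    finally show ?thesis by (rule exI[of _ "\<lambda>b. a (inv_into E f b)"])
  qed
  moreover have "f ` V \<subseteq> carrier (image_field f E)"
    using V unfolding carrier_image_field by auto
  ultimately show ?thesis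
    using V(1) by (intro that[of "f ` V"]) simp_all
qed

(* Condition H only speaks about field structures on subsets of 'k poly, so E is
   transported there along an injection. *)
lemma finite_ext_with_endo_image_field:
  fixes e :: "'k::field \<Rightarrow> 'l::field" and f :: "'l \<Rightarrow> 'k poly"
  assumes e: "ring_endo e" and \<Phi>: "ring_endo \<Phi>" and comm: "\<And>a. \<Phi> (e a) = e (\<phi> a)"
    and E: "is_subfield E" "range e \<subseteq> E" "\<Phi> ` E \<subseteq> E" and span: "finitely_spanned_over (range e) E"
    and f: "inj_on f E"
  shows "finite_ext_with_endo \<phi> (image_field f E) (\<lambda>a. f (e a)) (\<lambda>b. f (\<Phi> (inv_into E f b)))"
proof -
  let ?R = "image_field f E"
  note hom = ring_hom_image_field[OF f]
  have eE: "e a \<in> E" for a using E(2) by blast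
  have "f (e (a + b)) = f (e a) \<oplus>\<^bsub>?R\<^esub> f (e b)" "f (e (a * b)) = f (e a) \<otimes>\<^bsub>?R\<^esub> f (e b)" for a b
    using ring_hom_add[OF hom] ring_hom_mult[OF hom] eE
    by (simp_all add: ring_endo_add[OF e] ring_endo_mult[OF e])
  moreover have "range (\<lambda>a. f (e a)) \<subseteq> carrier ?R" "f (e 1) = \<one>\<^bsub>?R\<^esub>"
    using eE unfolding carrier_image_field image_ring_one by (auto simp: ring_endo_1[OF e])
  moreover have "f (\<Phi> (inv_into E f (f (e a)))) = f (e (\<phi> a))" for a
    using f eE comm by simp
  moreover obtain B where "finite B" "B \<subseteq> carrier ?R"
    "\<forall>x\<in>carrier ?R. \<exists>c. x = finsum ?R (\<lambda>b. f (e (c b)) \<otimes>\<^bsub>?R\<^esub> b) B"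
    using image_field_finitely_spanned[OF E(1,2) span f] .
  ultimately show ?thesis
    unfolding finite_ext_with_endo_def
    using field_image_field[OF E(1) f] conjugate_ring_endo_image_field_hom[OF E(1,3) \<Phi> f]
    by (intro conjI allI exI[of _ B]) assumption+
qed

lemma finitely_spanned_over_range_imp_inj_poly:
  fixes e :: "'k::field \<Rightarrow> 'l::field"
  assumes "finitely_spanned_over (range e) E"
  shows "\<exists>f :: 'l \<Rightarrow> 'k poly. inj_on f E"
proof -
  obtain V where "finite V"
    and coords: "\<forall>y\<in>E. \<exists>c. (\<forall>v\<in>V. c v \<in> range e) \<and> y = (\<Sum>v\<in>V. c v * v)"
    using assms unfolding finitely_spanned_over_def by blast
  have "\<forall>y\<in>E. \<exists>a. y = (\<Sum>v\<in>V. e (a v) * v)"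
  proof
    fix y assume "y \<in> E"
    then obtain c where "\<forall>v\<in>V. c v \<in> range e" "y = (\<Sum>v\<in>V. c v * v)"
      using coords by blast
    then show "\<exists>a. y = (\<Sum>v\<in>V. e (a v) * v)"
      by (intro exI[of _ "\<lambda>v. inv_into UNIV e (c v)"]) (simp add: f_inv_into_f)
  qed
  from bchoice[OF this] obtain a where a: "\<forall>y\<in>E. y = (\<Sum>v\<in>V. e (a y v) * v)" ..
  obtain vs where vs: "set vs = V" using finite_list[OF \<open>finite V\<close>] by blast
  have "inj_on (\<lambda>y. Poly (map (a y) vs)) E"
  proof (rule inj_onI)
    fix x y assume xy: "x \<in> E" "y \<in> E" "Poly (map (a x) vs) = Poly (map (a y) vs)"
    have a_eq: "a x v = a y v" if "v \<in> V" for v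
    proof -
      have "v \<in> set vs" using that vs by simp
      then obtain j where "j < length vs" "v = vs ! j"
        by (auto simp: in_set_conv_nth)
      then show ?thesis
        using arg_cong[OF xy(3), of "\<lambda>p. Polynomial.coeff p j"] by (simp add: nth_default_nth)
    qed
    have "x = (\<Sum>v\<in>V. e (a x v) * v)"
      using a xy(1) by (rule bspec)
    also have "\<dots> = (\<Sum>v\<in>V. e (a y v) * v)"
      using a_eq by (intro sum.cong) simp_all
    also have "\<dots> = y"
      using bspec[OF a xy(2)] by (rule sym)
    finally show "x = y" .
  qed
  then show ?thesis by blast
qed

lemma endo_stable_finite_subextension_subset_range:
  fixes e :: "'k::field \<Rightarrow> 'l::field"
  assumes e: "ring_endo e" and \<Phi>: "ring_endo \<Phi>" and comm: "\<And>a. \<Phi> (e a) = e (\<phi> a)"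
    and E: "is_subfield E" "range e \<subseteq> E" "\<Phi> ` E \<subseteq> E" and span: "finitely_spanned_over (range e) E"
    and no_ext: "\<And>(R :: 'k poly ring) \<iota> \<psi>. finite_ext_with_endo \<phi> R \<iota> \<psi> \<Longrightarrow> carrier R = range \<iota>"
  shows "E \<subseteq> range e"
proof
  obtain f :: "'l \<Rightarrow> 'k poly" where f: "inj_on f E"
    using finitely_spanned_over_range_imp_inj_poly[OF span] by blast
  have image: "f ` E = range (\<lambda>a. f (e a))"
    using no_ext[OF finite_ext_with_endo_image_field[OF e \<Phi> comm E span f]]
    by (simp add: carrier_image_field)
  fix y assume "y \<in> E"
  then have "f y \<in> range (\<lambda>a. f (e a))"
    unfolding image[symmetric] by (rule imageI)
  then obtain a where "f y = f (e a)" by blast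
  moreover have "e a \<in> E" using E(2) by blast
  ultimately have "y = e a" using inj_onD[OF f _ \<open>y \<in> E\<close>] by blast
  then show "y \<in> range e" by simp
qed

section \<open>\<sigma>-Picard-Vessiot fields\<close>

lemma funpow_commute_apply: "f \<circ> g = g \<circ> f \<Longrightarrow> f ((g ^^ n) x) = (g ^^ n) (f x)"
  by (induct n) (simp_all add: fun_eq_iff)

definition sigma_entries :: "('a \<Rightarrow> 'a) \<Rightarrow> 'a^'n^'n \<Rightarrow> nat \<Rightarrow> 'a set" where
  "sigma_entries \<Sigma> U d = {(\<Sigma> ^^ i) (U $ j $ k) | i j k. i \<le> d}"

lemma finite_sigma_entries: "finite (sigma_entries \<Sigma> (U :: 'a^'n^'n) d)"
proof -
  have "sigma_entries \<Sigma> U d = (\<Union>i\<le>d. \<Union>j. \<Union>k. {(\<Sigma> ^^ i) (U $ j $ k)})"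
    unfolding sigma_entries_def by blast
  then show ?thesis by simp
qed

lemma mono_sigma_entries: "mono (sigma_entries \<Sigma> U)"
  by (rule monoI) (force simp: sigma_entries_def)

lemma sigma_PV_fieldD:
  assumes "sigma_PV_field \<phi> \<sigma> A e \<Phi> \<Sigma> U"
  shows "ring_endo e" and "ring_endo \<Phi>" and "ring_endo \<Sigma>" and "\<Phi> \<circ> \<Sigma> = \<Sigma> \<circ> \<Phi>"
    and "\<Phi> (e a) = e (\<phi> a)" and "\<Sigma> (e a) = e (\<sigma> a)"
    and "map_matrix \<Phi> U = map_matrix e A ** U"
    and "generates_field (range e \<union> {(\<Sigma> ^^ i) (U $ j $ k) | i j k. True})"
  using assms unfolding sigma_PV_field_def by simp_all

lemma sigma_PV_field_Phi_sigma_entry: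
  assumes "sigma_PV_field \<phi> \<sigma> A e \<Phi> \<Sigma> U"
  shows "\<Phi> ((\<Sigma> ^^ i) (U $ j $ k)) = (\<Sum>l\<in>UNIV. e ((\<sigma> ^^ i) (A $ j $ l)) * (\<Sigma> ^^ i) (U $ l $ k))"
proof -
  note PV = sigma_PV_fieldD[OF assms]
  have \<Sigma>i: "ring_endo (\<Sigma> ^^ i)" using ring_endo_funpow[OF PV(3)] .
  have \<Sigma>i_e: "(\<Sigma> ^^ i) (e a) = e ((\<sigma> ^^ i) a)" for a
    by (induct i) (simp_all add: PV(6))
  have "\<Phi> (U $ j $ k) = map_matrix \<Phi> U $ j $ k" by simp
  also have "\<dots> = (\<Sum>l\<in>UNIV. e (A $ j $ l) * U $ l $ k)"
    unfolding PV(7) by (simp add: matrix_matrix_mult_def)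
  finally have "\<Phi> ((\<Sigma> ^^ i) (U $ j $ k)) = (\<Sigma> ^^ i) (\<Sum>l\<in>UNIV. e (A $ j $ l) * U $ l $ k)"
    using funpow_commute_apply[OF PV(4)] by metis
  then show ?thesis
    by (simp add: ring_endo_sum[OF \<Sigma>i] ring_endo_mult[OF \<Sigma>i] \<Sigma>i_e)
qed

lemma sigma_PV_field_Phi_stable:
  assumes PV: "sigma_PV_field \<phi> \<sigma> A e \<Phi> \<Sigma> U"
  shows "\<Phi> ` (is_subfield hull (range e \<union> sigma_entries \<Sigma> U d))
    \<subseteq> is_subfield hull (range e \<union> sigma_entries \<Sigma> U d)"
proof (rule ring_endo_image_hull_subset)
  show "ring_endo \<Phi>" using sigma_PV_fieldD(2)[OF PV] .
  have e_in: "e a \<in> is_subfield hull (range e \<union> sigma_entries \<Sigma> U d)" for a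
    by (rule hull_inc) simp
  have entry_in: "(\<Sigma> ^^ i) (U $ l $ k) \<in> is_subfield hull (range e \<union> sigma_entries \<Sigma> U d)"
    if "i \<le> d" for i l k
    by (rule hull_inc) (use that in \<open>auto simp: sigma_entries_def\<close>)
  show "\<Phi> ` (range e \<union> sigma_entries \<Sigma> U d) \<subseteq> is_subfield hull (range e \<union> sigma_entries \<Sigma> U d)"
  proof
    fix y assume "y \<in> \<Phi> ` (range e \<union> sigma_entries \<Sigma> U d)"
    then consider a where "y = \<Phi> (e a)"
      | i j k where "i \<le> d" "y = \<Phi> ((\<Sigma> ^^ i) (U $ j $ k))"
      unfolding sigma_entries_def by blast
    then show "y \<in> is_subfield hull (range e \<union> sigma_entries \<Sigma> U d)"
    proof cases
      case 1
      then show ?thesis using sigma_PV_fieldD(5)[OF PV] e_in by simp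
    next
      case (2 i j k)
      have "e ((\<sigma> ^^ i) (A $ j $ l)) * (\<Sigma> ^^ i) (U $ l $ k)
          \<in> is_subfield hull (range e \<union> sigma_entries \<Sigma> U d)" for l
        using e_in entry_in[OF 2(1)] is_subfield_hull unfolding is_subfield_def by blast
      then show ?thesis
        unfolding 2(2) sigma_PV_field_Phi_sigma_entry[OF PV]
        by (intro is_subfield_sum[OF is_subfield_hull])
    qed
  qed
qed

lemma sigma_PV_field_exhausted:
  assumes "sigma_PV_field \<phi> \<sigma> A e \<Phi> \<Sigma> U"
  shows "\<exists>d. x \<in> is_subfield hull (range e \<union> sigma_entries \<Sigma> U d)"
proof -
  have "range e \<union> {(\<Sigma> ^^ i) (U $ j $ k) | i j k. True} \<subseteq> (\<Union>d. range e \<union> sigma_entries \<Sigma> U d)"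
  proof
    fix y assume "y \<in> range e \<union> {(\<Sigma> ^^ i) (U $ j $ k) | i j k. True}"
    then consider "y \<in> range e" | i j k where "y = (\<Sigma> ^^ i) (U $ j $ k)" by blast
    then show "y \<in> (\<Union>d. range e \<union> sigma_entries \<Sigma> U d)"
    proof cases
      case (2 i j k)
      then have "y \<in> sigma_entries \<Sigma> U i" unfolding sigma_entries_def by blast
      then show ?thesis by blast
    qed blast
  qed
  moreover have "mono (\<lambda>d. range e \<union> sigma_entries \<Sigma> U d)"
    by (intro monoI Un_mono order_refl monoD[OF mono_sigma_entries])
  ultimately show ?thesis
    by (rule generates_field_chain[OF sigma_PV_fieldD(8)[OF assms]])
qed

lemma condition_H_no_finite_ext_with_endo:
  assumes "condition_H \<phi> \<sigma>" and "finite_ext_with_endo \<phi> R \<iota> \<psi>"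
  shows "carrier R = range \<iota>"
  using assms(1)[unfolded condition_H_def, THEN conjunct2, THEN conjunct2, rule_format, of 1] assms(2)
  by simp

lemma sigma_PV_field_algebraics_subset_range:
  fixes e :: "'k::field \<Rightarrow> 'l::field"
  assumes PV: "sigma_PV_field \<phi> \<sigma> A e \<Phi> \<Sigma> U" and H: "condition_H \<phi> \<sigma>"
  shows "is_subfield hull (range e \<union> sigma_entries \<Sigma> U d) \<inter> {y. algebraic_over (range e) y} \<subseteq> range e"
    (is "?F \<inter> ?alg \<subseteq> _")
proof (rule endo_stable_finite_subextension_subset_range)
  note e = sigma_PV_fieldD(1)[OF PV] and \<Phi> = sigma_PV_fieldD(2)[OF PV]
  have K: "is_subfield (range e)" using is_subfield_range_ring_endo[OF e] .
  show "ring_endo e" "ring_endo \<Phi>" "\<Phi> (e a) = e (\<phi> a)" for a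
    using e \<Phi> sigma_PV_fieldD(5)[OF PV] .
  show "is_subfield (?F \<inter> ?alg)"
    by (intro is_subfield_Int is_subfield_hull is_subfield_algebraics K)
  show "range e \<subseteq> ?F \<inter> ?alg"
    using algebraic_over_self[OF K] by (auto intro: hull_inc)
  have "\<Phi> ` range e \<subseteq> range e"
    using sigma_PV_fieldD(5)[OF PV] by auto
  then show "\<Phi> ` (?F \<inter> ?alg) \<subseteq> ?F \<inter> ?alg"
    using sigma_PV_field_Phi_stable[OF PV] algebraic_over_ring_endo_image[OF \<Phi>] by blast
  show "finitely_spanned_over (range e) (?F \<inter> ?alg)"
    by (rule relative_algebraic_closure_finitely_spanned[OF K finite_sigma_entries[of \<Sigma> U d]]) simp
  show "carrier R = range \<iota>" if "finite_ext_with_endo \<phi> R \<iota> \<psi>" for R :: "'k poly ring" and \<iota> \<psi>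
    using condition_H_no_finite_ext_with_endo[OF H that] .
qed

theorem lemma3p6:
  fixes \<phi> \<sigma> :: "'k::field \<Rightarrow> 'k" and A :: "'k^'n^'n"
    and e :: "'k \<Rightarrow> 'l::field" and \<Phi> \<Sigma> :: "'l \<Rightarrow> 'l" and U :: "'l^'n^'n"
  assumes "ring_endo \<phi>" and "ring_endo \<sigma>" and "\<phi> \<circ> \<sigma> = \<sigma> \<circ> \<phi>"
    and "condition_H \<phi> \<sigma>"
    and "invertible A"
    and "sigma_PV_field \<phi> \<sigma> A e \<Phi> \<Sigma> U"
  shows "rel_alg_closed_in e"
  unfolding rel_alg_closed_in_def
proof (intro allI impI)
  fix x assume "\<exists>p. p \<noteq> 0 \<and> poly (map_poly e p) x = 0"
  then have "algebraic_over (range e) x"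
    using algebraic_over_range[OF sigma_PV_fieldD(1)[OF assms(6)]] by blast
  moreover obtain d where "x \<in> is_subfield hull (range e \<union> sigma_entries \<Sigma> U d)"
    using sigma_PV_field_exhausted[OF assms(6)] by blast
  ultimately show "x \<in> range e"
    using sigma_PV_field_algebraics_subset_range[OF assms(6,4)] by blast
qed

end
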